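(* Let $X_1,\dots,X_k$ be i.i.d. $C_0$-bounded random variables on $[0,L]$, and for $x\in[0,L]$ let $Y(x)=\min_{1\le j\le k}|x-X_j|$. Then $$\min_{0\le x\le L}\mathbf E\big(Y(x)\big)\ge\frac{1}{2C_0(k+1)}.$$
   Context: A real random variable $X$ is $C_0$-bounded (on $[0,L]$) if its cumulative distribution function $F$ equals $0$ on $(-\infty,0)$, $1$ on $(L,\infty)$, and $\varphi$ on $[0,L]$, where $\varphi$ is continuous and weakly differentiable on $[0,L]$ with $\varphi(0)=0$, $\varphi(L)=1$ and $\|\varphi'\|_{L_\infty([0,L])}\le C_0$. *)

theory Defs
  imports "HOL-Probability.Probability"
begin

definition weak_derivative_on :: "real \<Rightarrow> (real \<Rightarrow> real) \<Rightarrow> (real \<Rightarrow> real) \<Rightarrow> bool" where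
  "weak_derivative_on L \<phi> g \<longleftrightarrow>
     set_borel_measurable lborel {0..L} g \<and>
     (\<forall>\<psi> \<psi>'. (\<forall>t. (\<psi> has_real_derivative \<psi>' t) (at t)) \<and> continuous_on UNIV \<psi>' \<and>
              compact (closure {t. \<psi> t \<noteq> 0}) \<and> closure {t. \<psi> t \<noteq> 0} \<subseteq> {0<..<L}
        \<longrightarrow> (LINT t:{0..L}|lborel. \<phi> t * \<psi>' t) = - (LINT t:{0..L}|lborel. g t * \<psi> t))"

definition cdf_of :: "'a measure \<Rightarrow> ('a \<Rightarrow> real) \<Rightarrow> real \<Rightarrow> real" where
  "cdf_of M X t = measure M {\<omega> \<in> space M. X \<omega> \<le> t}"

definition C0_bounded :: "'a measure \<Rightarrow> real \<Rightarrow> real \<Rightarrow> ('a \<Rightarrow> real) \<Rightarrow> bool" where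
  "C0_bounded M C0 L X \<longleftrightarrow>
     (\<forall>t<0. cdf_of M X t = 0) \<and> (\<forall>t>L. cdf_of M X t = 1) \<and>
     (\<exists>\<phi> g. (\<forall>t\<in>{0..L}. cdf_of M X t = \<phi> t) \<and> continuous_on {0..L} \<phi> \<and>
            \<phi> 0 = 0 \<and> \<phi> L = 1 \<and> weak_derivative_on L \<phi> g \<and>
            (AE t in lborel. t \<in> {0..L} \<longrightarrow> \<bar>g t\<bar> \<le> C0))"

end

theory Submission
  imports Defs
begin

text \<open>A bounded weak derivative makes each distribution function \<open>C\<^sub>0\<close>-Lipschitz, so \<open>X\<^sub>j\<close>
  falls within distance \<open>t\<close> of \<open>x\<close> with probability at most \<open>2 C\<^sub>0 t\<close>. By independence,
  \<open>P(Y(x) > t) \<ge> (1 - 2 C\<^sub>0 t)\<^sup>k\<close> for \<open>0 \<le> t \<le> 1 / (2 C\<^sub>0)\<close>, and integrating this tail bound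
  over \<open>[0, 1 / (2 C\<^sub>0)]\<close> gives \<open>E Y(x) \<ge> 1 / (2 C\<^sub>0 (k + 1))\<close>; the integral is bounded below by
  Riemann sums of level-set probabilities.\<close>

section \<open>Lipschitz bounds from weak derivatives\<close>

lemma le_of_le_add_scaled_epsilon:
  fixes x y K :: real
  assumes K: "K \<ge> 0" and le: "\<And>e. e > 0 \<Longrightarrow> x \<le> y + K * e"
  shows "x \<le> y"
proof (rule field_le_epsilon)
  fix e :: real assume e: "e > 0"
  have "K * (e / (K + 1)) \<le> e" using K e by (simp add: field_simps)
  then show "x \<le> y + e" using le[of "e / (K + 1)"] K e by simp
qed

definition pos_sq :: "real \<Rightarrow> real" where "pos_sq s = (max 0 s)\<^sup>2"

lemma pos_sq_has_real_derivative: "(pos_sq has_real_derivative 2 * max 0 s) (at s)"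
proof (cases "s = 0")
  case True
  have "((\<lambda>y. (pos_sq y - pos_sq 0) / (y - 0)) \<longlongrightarrow> 0) (at 0)"
  proof (rule Lim_transform_eventually)
    show "((\<lambda>y. max 0 y) \<longlongrightarrow> 0) (at (0::real))"
      using tendsto_max[OF tendsto_const[of 0] tendsto_ident_at[of 0 UNIV]] by simp
    have "\<forall>\<^sub>F y in at (0::real). y \<noteq> 0" by (simp add: eventually_at_filter)
    then show "\<forall>\<^sub>F y in at 0. max 0 y = (pos_sq y - pos_sq 0) / (y - 0)"
      by (rule eventually_mono) (simp add: pos_sq_def power2_eq_square max_def)
  qed
  then show ?thesis using True by (simp add: has_field_derivative_iff)
next
  case False
  then consider "s > 0" | "s < 0" by linarith
  then show ?thesis
  proof cases
    case 1
    have "((\<lambda>y. y\<^sup>2) has_real_derivative 2 * s) (at s)"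
      by (auto intro!: derivative_eq_intros)
    moreover have "\<forall>\<^sub>F y in nhds s. y\<^sup>2 = pos_sq y"
      using eventually_nhds_in_open[of "{0<..}" s] 1
      by (auto simp: pos_sq_def elim!: eventually_mono)
    ultimately show ?thesis using 1 DERIV_cong_ev by fastforce
  next
    case 2
    have "\<forall>\<^sub>F y in nhds s. 0 = pos_sq y"
      using eventually_nhds_in_open[of "{..<0}" s] 2
      by (auto simp: pos_sq_def elim!: eventually_mono)
    then show ?thesis using 2 DERIV_cong_ev[of s s "\<lambda>_. 0" pos_sq 0 0] by simp
  qed
qed

text \<open>A quadratic spline that rises in a \<open>C\<^sup>1\<close> way from \<open>0\<close> on \<open>s \<le> 0\<close> to \<open>1\<close> on
  \<open>s \<ge> 1\<close>; its derivative \<open>ramp'\<close> is the tent of height \<open>2\<close> over \<open>[0,1]\<close>.\<close>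

definition ramp :: "real \<Rightarrow> real" where
  "ramp s = 2 * (pos_sq s - 2 * pos_sq (s - 1/2) + pos_sq (s - 1))"

definition ramp' :: "real \<Rightarrow> real" where
  "ramp' s = 4 * (max 0 s - 2 * max 0 (s - 1/2) + max 0 (s - 1))"

lemma ramp_has_real_derivative: "(ramp has_real_derivative ramp' s) (at s)"
proof -
  have shift: "((\<lambda>s. pos_sq (s - c)) has_real_derivative 2 * max 0 (s - c)) (at s)" for c
    using DERIV_chain2[OF pos_sq_has_real_derivative, of "\<lambda>s. s - c" 1 s]
    by (simp add: DERIV_diff[OF DERIV_ident DERIV_const, simplified])
  have "((\<lambda>s. 2 * (pos_sq s - 2 * pos_sq (s - 1/2) + pos_sq (s - 1))) has_real_derivative
      2 * (2 * max 0 s - 2 * (2 * max 0 (s - 1/2)) + 2 * max 0 (s - 1))) (at s)"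
    by (intro DERIV_cmult DERIV_add DERIV_diff pos_sq_has_real_derivative shift)
  then show ?thesis unfolding ramp_def[abs_def] ramp'_def by (simp add: algebra_simps)
qed

lemma ramp_comp_has_real_derivative:
  assumes "h > 0"
  shows "((\<lambda>t. ramp ((t - c) / h)) has_real_derivative ramp' ((t - c) / h) / h) (at t)"
proof -
  have "((\<lambda>t. (t - c) / h) has_real_derivative 1 / h) (at t)"
    using assms by (auto intro!: derivative_eq_intros)
  from DERIV_chain2[OF ramp_has_real_derivative this] show ?thesis by simp
qed

lemma continuous_on_ramp'[continuous_intros]:
  "continuous_on S f \<Longrightarrow> continuous_on S (\<lambda>x. ramp' (f x))"
  unfolding ramp'_def by (intro continuous_intros)

lemma ramp'_nonneg: "ramp' s \<ge> 0"
  unfolding ramp'_def by (simp add: max_def)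

lemma ramp'_eq_0: "s \<le> 0 \<or> s \<ge> 1 \<Longrightarrow> ramp' s = 0"
  unfolding ramp'_def by (auto simp: max_def)

lemma ramp_eq_0: "s \<le> 0 \<Longrightarrow> ramp s = 0"
  unfolding ramp_def pos_sq_def by (auto simp: max_def)

lemma ramp_eq_1: "s \<ge> 1 \<Longrightarrow> ramp s = 1"
  unfolding ramp_def pos_sq_def by (auto simp: max_def power2_eq_square algebra_simps)

lemma ramp_bounds: "0 \<le> ramp s \<and> ramp s \<le> 1"
proof -
  consider "s \<le> 0" | "0 \<le> s" "s \<le> 1/2" | "1/2 \<le> s" "s \<le> 1" | "s \<ge> 1" by linarith
  then show ?thesis
  proof cases
    case 2
    then have "ramp s = 2 * s\<^sup>2" unfolding ramp_def pos_sq_def by (auto simp: max_def)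
    moreover have "s\<^sup>2 \<le> (1/2)\<^sup>2" using 2 by (intro power_mono) auto
    ultimately show ?thesis by (simp add: power2_eq_square)
  next
    case 3
    then have "ramp s = 1 - 2 * (1 - s)\<^sup>2"
      unfolding ramp_def pos_sq_def by (auto simp: max_def power2_eq_square algebra_simps)
    moreover have "(1 - s)\<^sup>2 \<le> (1/2)\<^sup>2" using 3 by (intro power_mono) auto
    ultimately show ?thesis by (simp add: power2_eq_square)
  qed (auto simp: ramp_eq_0 ramp_eq_1)
qed

definition bump :: "real \<Rightarrow> real \<Rightarrow> real \<Rightarrow> real" where
  "bump c h t = ramp' ((t - c) / h) / h"

lemma continuous_on_bump[continuous_intros]: "h \<noteq> 0 \<Longrightarrow> continuous_on S (bump c h)"
  unfolding bump_def by (intro continuous_intros) auto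

lemma bump_nonneg: "h > 0 \<Longrightarrow> bump c h t \<ge> 0"
  unfolding bump_def using ramp'_nonneg by simp

lemma bump_eq_0: "h > 0 \<Longrightarrow> t \<notin> {c<..<c + h} \<Longrightarrow> bump c h t = 0"
  unfolding bump_def by (rule divide_eq_0_iff[THEN iffD2], rule disjI1, rule ramp'_eq_0)
    (auto simp: field_simps)

lemma set_integral_bump:
  assumes h: "h > 0" and c: "0 \<le> c" "c + h \<le> L"
  shows "(LINT t:{0..L}|lborel. bump c h t) = 1"
proof -
  have "(LINT t:{0..L}|lborel. bump c h t) = ramp ((L - c) / h) - ramp ((0 - c) / h)"
    unfolding set_lebesgue_integral_def bump_def using c h
    by (intro integral_FTC_atLeastAtMost)
      (auto intro!: continuous_intros has_field_derivative_at_within ramp_comp_has_real_derivative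
        simp: has_real_derivative_iff_has_vector_derivative[symmetric])
  also have "\<dots> = 1" using h c by (simp add: ramp_eq_0 ramp_eq_1 field_simps)
  finally show ?thesis .
qed

lemma set_integral_mult_bump_approx:
  fixes \<phi> :: "real \<Rightarrow> real"
  assumes h: "h > 0" and c: "0 \<le> c" "c + h \<le> L"
    and cont: "continuous_on {0..L} \<phi>"
    and near: "\<And>t. c < t \<Longrightarrow> t < c + h \<Longrightarrow> \<bar>\<phi> t - v\<bar> \<le> e"
  shows "\<bar>(LINT t:{0..L}|lborel. \<phi> t * bump c h t) - v\<bar> \<le> e"
proof -
  have int_bump: "set_integrable lborel {0..L} (bump c h)"
    using h by (intro borel_integrable_atLeastAtMost' continuous_intros) auto
  have int_prod: "set_integrable lborel {0..L} (\<lambda>t. \<phi> t * bump c h t)"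
    using h by (intro borel_integrable_atLeastAtMost' continuous_intros cont) auto
  have pointwise: "(v - e) * bump c h t \<le> \<phi> t * bump c h t \<and> \<phi> t * bump c h t \<le> (v + e) * bump c h t"
    for t
  proof (cases "c < t \<and> t < c + h")
    case True
    then show ?thesis using near[of t] bump_nonneg[OF h, of c t]
      by (auto intro!: mult_right_mono)
  qed (use h in \<open>simp add: bump_eq_0\<close>)
  have "(LINT t:{0..L}|lborel. \<phi> t * bump c h t) \<le> (LINT t:{0..L}|lborel. (v + e) * bump c h t)"
    using int_prod int_bump pointwise by (intro set_integral_mono) auto
  moreover have "(LINT t:{0..L}|lborel. (v - e) * bump c h t) \<le> (LINT t:{0..L}|lborel. \<phi> t * bump c h t)"
    using int_prod int_bump pointwise by (intro set_integral_mono) auto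
  ultimately show ?thesis using set_integral_bump[OF h c] by (simp add: abs_le_iff)
qed

lemma abs_set_integral_mult_le:
  fixes g \<psi> :: "real \<Rightarrow> real"
  assumes g: "AE t in lborel. t \<in> {0..L} \<longrightarrow> \<bar>g t\<bar> \<le> C0" and C0: "C0 \<ge> 0"
    and \<psi>: "\<And>t. \<bar>\<psi> t\<bar> \<le> indicator {p..q} t" and pq: "p \<le> q"
  shows "\<bar>LINT t:{0..L}|lborel. g t * \<psi> t\<bar> \<le> C0 * (q - p)"
proof -
  have int: "integrable lborel (\<lambda>t. indicator {p..q} t *\<^sub>R C0)"
    using borel_integrable_atLeastAtMost'[of p q "\<lambda>_. C0"] unfolding set_integrable_def by simp
  have "AE t in lborel. \<bar>indicator {0..L} t *\<^sub>R (g t * \<psi> t)\<bar> \<le> indicator {p..q} t *\<^sub>R C0"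
    using g
  proof (rule AE_mp, intro AE_I2 impI)
    fix t assume gt: "t \<in> {0..L} \<longrightarrow> \<bar>g t\<bar> \<le> C0"
    have "\<bar>g t * \<psi> t\<bar> \<le> C0 * indicator {p..q} t" if "t \<in> {0..L}"
      unfolding abs_mult using that gt \<psi>[of t] by (intro mult_mono) auto
    then show "\<bar>indicator {0..L} t *\<^sub>R (g t * \<psi> t)\<bar> \<le> indicator {p..q} t *\<^sub>R C0"
      using C0 by (cases "t \<in> {0..L}") (auto simp: mult.commute)
  qed
  then have "(\<integral>t. \<bar>indicator {0..L} t *\<^sub>R (g t * \<psi> t)\<bar> \<partial>lborel) \<le> (\<integral>t. indicator {p..q} t *\<^sub>R C0 \<partial>lborel)"
    using C0 by (intro integral_mono_AE'[OF int]) auto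
  then have "\<bar>LINT t:{0..L}|lborel. g t * \<psi> t\<bar> \<le> (\<integral>t. indicator {p..q} t *\<^sub>R C0 \<partial>lborel)"
    unfolding set_lebesgue_integral_def by (rule order.trans[OF integral_abs_bound])
  also have "\<dots> = C0 * q - C0 * p"
    by (rule integral_FTC_atLeastAtMost[OF pq]) (auto intro!: derivative_eq_intros)
  finally show ?thesis by (simp add: algebra_simps)
qed

text \<open>A \<open>C\<^sup>1\<close> approximation of the indicator of \<open>[a, b]\<close>, supported in \<open>[a - h, b + h]\<close>.\<close>

definition plateau :: "real \<Rightarrow> real \<Rightarrow> real \<Rightarrow> real \<Rightarrow> real" where
  "plateau a b h t = ramp ((t - (a - h)) / h) - ramp ((t - b) / h)"

lemma plateau_has_real_derivative:
  "h > 0 \<Longrightarrow> (plateau a b h has_real_derivative bump (a - h) h t - bump b h t) (at t)"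
  unfolding plateau_def[abs_def] bump_def
  by (intro DERIV_diff ramp_comp_has_real_derivative)

lemma abs_plateau_le_indicator:
  assumes "h > 0" "a \<le> b"
  shows "\<bar>plateau a b h t\<bar> \<le> indicator {a - h..b + h} t"
proof (cases "t \<in> {a - h..b + h}")
  case True
  then show ?thesis unfolding plateau_def
    using ramp_bounds[of "(t - (a - h)) / h"] ramp_bounds[of "(t - b) / h"] by auto
next
  case False
  then consider "t < a - h" | "t > b + h" by auto
  then have "plateau a b h t = 0"
  proof cases
    case 1
    then show ?thesis using assms unfolding plateau_def
      by (simp add: ramp_eq_0 field_simps)
  next
    case 2
    then show ?thesis using assms unfolding plateau_def
      by (simp add: ramp_eq_1 field_simps)
  qed
  then show ?thesis by simp
qed

lemma weak_derivative_onD: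
  assumes "weak_derivative_on L \<phi> g" and "\<And>t. (\<psi> has_real_derivative \<psi>' t) (at t)"
    and "continuous_on UNIV \<psi>'" and "compact (closure {t. \<psi> t \<noteq> 0})"
    and "closure {t. \<psi> t \<noteq> 0} \<subseteq> {0<..<L}"
  shows "(LINT t:{0..L}|lborel. \<phi> t * \<psi>' t) = - (LINT t:{0..L}|lborel. g t * \<psi> t)"
proof -
  have "\<forall>\<psi> \<psi>'. (\<forall>t. (\<psi> has_real_derivative \<psi>' t) (at t)) \<and> continuous_on UNIV \<psi>' \<and>
      compact (closure {t. \<psi> t \<noteq> 0}) \<and> closure {t. \<psi> t \<noteq> 0} \<subseteq> {0<..<L}
      \<longrightarrow> (LINT t:{0..L}|lborel. \<phi> t * \<psi>' t) = - (LINT t:{0..L}|lborel. g t * \<psi> t)"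
    using assms(1) unfolding weak_derivative_on_def by (rule conjunct2)
  from this[rule_format, of \<psi> \<psi>'] show ?thesis using assms(2-5) by blast
qed

lemma weak_derivative_on_plateau:
  assumes wd: "weak_derivative_on L \<phi> g" and cont: "continuous_on {0..L} \<phi>"
    and h: "h > 0" and ab: "0 < a - h" "a \<le> b" "b + h < L"
  shows "(LINT t:{0..L}|lborel. \<phi> t * bump (a - h) h t) - (LINT t:{0..L}|lborel. \<phi> t * bump b h t)
    = - (LINT t:{0..L}|lborel. g t * plateau a b h t)"
proof -
  have supp: "{t. plateau a b h t \<noteq> 0} \<subseteq> {a - h..b + h}"
  proof
    fix t assume "t \<in> {t. plateau a b h t \<noteq> 0}"
    then show "t \<in> {a - h..b + h}"
      using abs_plateau_le_indicator[OF h ab(2), of t] by (cases "t \<in> {a - h..b + h}") auto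
  qed
  then have "closure {t. plateau a b h t \<noteq> 0} \<subseteq> {a - h..b + h}"
    by (rule closure_minimal) simp
  then have inside: "closure {t. plateau a b h t \<noteq> 0} \<subseteq> {0<..<L}"
    using ab by auto
  have compact: "compact (closure {t. plateau a b h t \<noteq> 0})"
    unfolding compact_closure by (rule bounded_subset[OF bounded_closed_interval supp])
  have "continuous_on UNIV (\<lambda>t. bump (a - h) h t - bump b h t)"
    using h by (intro continuous_intros) auto
  from weak_derivative_onD[OF wd plateau_has_real_derivative[OF h] this compact inside]
  have "(LINT t:{0..L}|lborel. \<phi> t * (bump (a - h) h t - bump b h t))
      = - (LINT t:{0..L}|lborel. g t * plateau a b h t)" .
  moreover have "set_integrable lborel {0..L} (\<lambda>t. \<phi> t * bump c h t)" for c
    using h by (intro borel_integrable_atLeastAtMost' continuous_intros cont) auto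
  then have "(LINT t:{0..L}|lborel. \<phi> t * (bump (a - h) h t - bump b h t)) =
      (LINT t:{0..L}|lborel. \<phi> t * bump (a - h) h t) - (LINT t:{0..L}|lborel. \<phi> t * bump b h t)"
    by (simp add: right_diff_distrib set_integral_diff(2))
  ultimately show ?thesis by simp
qed

text \<open>The bump averages of \<open>\<phi>\<close> next to \<open>a\<close> and \<open>b\<close> approximate \<open>\<phi> a\<close> and \<open>\<phi> b\<close>, and by
  weak differentiability their difference is an integral of \<open>g\<close> over \<open>[a - h, b + h]\<close>.\<close>

lemma weak_derivative_on_lipschitz_interior:
  assumes wd: "weak_derivative_on L \<phi> g" and cont: "continuous_on {0..L} \<phi>"
    and g: "AE t in lborel. t \<in> {0..L} \<longrightarrow> \<bar>g t\<bar> \<le> C0" and C0: "C0 \<ge> 0"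
    and ab: "0 < a" "a \<le> b" "b < L"
  shows "\<bar>\<phi> b - \<phi> a\<bar> \<le> C0 * (b - a)"
proof (rule le_of_le_add_scaled_epsilon)
  show "2 * C0 + 2 \<ge> 0" using C0 by simp
  fix e :: real assume e: "e > 0"
  have "a \<in> {0..L}" "b \<in> {0..L}" using ab by auto
  then obtain da db where
    da: "da > 0" "\<forall>t\<in>{0..L}. dist t a < da \<longrightarrow> dist (\<phi> t) (\<phi> a) < e" and
    db: "db > 0" "\<forall>t\<in>{0..L}. dist t b < db \<longrightarrow> dist (\<phi> t) (\<phi> b) < e"
    using cont e unfolding continuous_on_iff by blast
  define h where "h = min (min (da / 2) (db / 2)) (min (min (a / 2) ((L - b) / 2)) e)"
  have "h \<le> da / 2" "h \<le> db / 2" "h \<le> a / 2" "h \<le> (L - b) / 2" "h \<le> e"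
    unfolding h_def by linarith+
  moreover have "h > 0" using da db ab e by (simp add: h_def)
  ultimately have h: "0 < h" "h < da" "h < db" "h < a" "b + h < L" "h \<le> e"
    using da db ab by auto
  have near_a: "\<bar>(LINT t:{0..L}|lborel. \<phi> t * bump (a - h) h t) - \<phi> a\<bar> \<le> e"
  proof (rule set_integral_mult_bump_approx[OF h(1) _ _ cont])
    fix t assume "a - h < t" "t < a - h + h"
    then show "\<bar>\<phi> t - \<phi> a\<bar> \<le> e" using h ab da(2)[rule_format, of t] by (auto simp: dist_real_def)
  qed (use h ab in auto)
  have near_b: "\<bar>(LINT t:{0..L}|lborel. \<phi> t * bump b h t) - \<phi> b\<bar> \<le> e"
  proof (rule set_integral_mult_bump_approx[OF h(1) _ _ cont])
    fix t assume "b < t" "t < b + h"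
    then show "\<bar>\<phi> t - \<phi> b\<bar> \<le> e" using h ab db(2)[rule_format, of t] by (auto simp: dist_real_def)
  qed (use h ab in auto)
  have "\<bar>LINT t:{0..L}|lborel. g t * plateau a b h t\<bar> \<le> C0 * ((b + h) - (a - h))"
    using h ab by (intro abs_set_integral_mult_le[OF g C0 abs_plateau_le_indicator]) auto
  also have "\<dots> \<le> C0 * (b - a) + 2 * C0 * e"
    using mult_left_mono[OF h(6) C0] by (simp add: algebra_simps)
  finally have "\<bar>LINT t:{0..L}|lborel. g t * plateau a b h t\<bar> \<le> C0 * (b - a) + 2 * C0 * e" .
  moreover have "(LINT t:{0..L}|lborel. \<phi> t * bump (a - h) h t) - (LINT t:{0..L}|lborel. \<phi> t * bump b h t)
      = - (LINT t:{0..L}|lborel. g t * plateau a b h t)"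
    by (rule weak_derivative_on_plateau[OF wd cont h(1)]) (use h ab in auto)
  ultimately have "\<bar>\<phi> b - \<phi> a\<bar> \<le> C0 * (b - a) + 2 * C0 * e + 2 * e"
    using near_a near_b by (simp only: abs_le_iff) linarith
  then show "\<bar>\<phi> b - \<phi> a\<bar> \<le> C0 * (b - a) + (2 * C0 + 2) * e"
    by (simp add: algebra_simps)
qed

lemma weak_derivative_on_lipschitz:
  assumes wd: "weak_derivative_on L \<phi> g" and cont: "continuous_on {0..L} \<phi>"
    and g: "AE t in lborel. t \<in> {0..L} \<longrightarrow> \<bar>g t\<bar> \<le> C0" and C0: "C0 \<ge> 0"
    and ab: "0 \<le> a" "a \<le> b" "b \<le> L"
  shows "\<bar>\<phi> b - \<phi> a\<bar> \<le> C0 * (b - a)"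
proof (cases "a = b")
  case False
  then have "a < b" using ab by simp
  show ?thesis
  proof (rule le_of_le_add_scaled_epsilon)
    fix e :: real assume e: "e > 0"
    have "a \<in> {0..L}" "b \<in> {0..L}" using ab by auto
    then obtain da db where
      da: "da > 0" "\<forall>t\<in>{0..L}. dist t a < da \<longrightarrow> dist (\<phi> t) (\<phi> a) < e" and
      db: "db > 0" "\<forall>t\<in>{0..L}. dist t b < db \<longrightarrow> dist (\<phi> t) (\<phi> b) < e"
      using cont e unfolding continuous_on_iff by blast
    define d where "d = min (min (da / 2) (db / 2)) ((b - a) / 3)"
    have "d \<le> da / 2" "d \<le> db / 2" "d \<le> (b - a) / 3"
      unfolding d_def by linarith+
    moreover have "d > 0" using da db \<open>a < b\<close> by (simp add: d_def)
    ultimately have d: "0 < d" "d < da" "d < db" "d < (b - a) / 2"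
      using da db by auto
    have "\<bar>\<phi> (b - d) - \<phi> (a + d)\<bar> \<le> C0 * ((b - d) - (a + d))"
      by (rule weak_derivative_on_lipschitz_interior[OF wd cont g C0]) (use d ab in auto)
    moreover have "C0 * ((b - d) - (a + d)) \<le> C0 * (b - a)" using d C0 by (intro mult_left_mono) auto
    moreover have "\<bar>\<phi> (a + d) - \<phi> a\<bar> < e" "\<bar>\<phi> (b - d) - \<phi> b\<bar> < e"
      using da(2)[rule_format, of "a + d"] db(2)[rule_format, of "b - d"] d ab by (auto simp: dist_real_def)
    ultimately show "\<bar>\<phi> b - \<phi> a\<bar> \<le> C0 * (b - a) + 2 * e"
      by (simp add: abs_le_iff abs_less_iff)
  qed simp
qed simp

section \<open>\<open>C\<^sub>0\<close>-bounded random variables\<close>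

lemma C0_bounded_length_pos:
  assumes "C0_bounded M C0 L X"
  shows "L > 0"
proof -
  obtain \<phi> g where \<phi>: "\<forall>t\<in>{0..L}. cdf_of M X t = \<phi> t" "continuous_on {0..L} \<phi>" "\<phi> 0 = 0" "\<phi> L = 1"
      "weak_derivative_on L \<phi> g" "AE t in lborel. t \<in> {0..L} \<longrightarrow> \<bar>g t\<bar> \<le> C0"
    and lo: "\<forall>t<0. cdf_of M X t = 0" and hi: "\<forall>t>L. cdf_of M X t = 1"
    using assms unfolding C0_bounded_def by blast
  have "L \<noteq> 0" using \<phi>(3,4) by auto
  moreover have "\<not> L < 0"
  proof
    assume "L < 0"
    then have "cdf_of M X (L / 2) = 0" "cdf_of M X (L / 2) = 1"
      using lo hi[rule_format, of "L / 2"] by auto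
    then show False by simp
  qed
  ultimately show ?thesis by linarith
qed

lemma C0_bounded_cdf:
  assumes "C0_bounded M C0 L X"
  shows "cdf_of M X 0 = 0" and "cdf_of M X L = 1"
proof -
  obtain \<phi> g where \<phi>: "\<forall>t\<in>{0..L}. cdf_of M X t = \<phi> t" "continuous_on {0..L} \<phi>" "\<phi> 0 = 0" "\<phi> L = 1"
      "weak_derivative_on L \<phi> g" "AE t in lborel. t \<in> {0..L} \<longrightarrow> \<bar>g t\<bar> \<le> C0"
    and lo: "\<forall>t<0. cdf_of M X t = 0" and hi: "\<forall>t>L. cdf_of M X t = 1"
    using assms unfolding C0_bounded_def by blast
  then show "cdf_of M X 0 = 0" and "cdf_of M X L = 1"
    using C0_bounded_length_pos[OF assms] by simp_all
qed

lemma C0_bounded_cdf_lipschitz: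
  assumes cb: "C0_bounded M C0 L X" and C0: "C0 \<ge> 0" and vu: "v \<le> u"
  shows "cdf_of M X u - cdf_of M X v \<le> C0 * (u - v)"
proof -
  obtain \<phi> g where \<phi>: "\<forall>t\<in>{0..L}. cdf_of M X t = \<phi> t" "continuous_on {0..L} \<phi>" "\<phi> 0 = 0" "\<phi> L = 1"
      "weak_derivative_on L \<phi> g" "AE t in lborel. t \<in> {0..L} \<longrightarrow> \<bar>g t\<bar> \<le> C0"
    and lo: "\<forall>t<0. cdf_of M X t = 0" and hi: "\<forall>t>L. cdf_of M X t = 1"
    using cb unfolding C0_bounded_def by blast
  have L: "L > 0" by (rule C0_bounded_length_pos[OF cb])
  define clamp where "clamp s = max 0 (min L s)" for s
  have cdf_clamp: "cdf_of M X s = \<phi> (clamp s)" for s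
  proof -
    consider "s < 0" | "s > L" | "s \<in> {0..L}" by force
    then show ?thesis
      by cases (use lo hi \<phi>(1,3,4) L in \<open>simp_all add: clamp_def\<close>)
  qed
  have "clamp v \<le> clamp u" "0 \<le> clamp v" "clamp u \<le> L" "clamp u - clamp v \<le> u - v"
    using vu L by (auto simp: clamp_def)
  then have "\<bar>\<phi> (clamp u) - \<phi> (clamp v)\<bar> \<le> C0 * (clamp u - clamp v)"
    by (intro weak_derivative_on_lipschitz[OF \<phi>(5,2,6) C0]) auto
  also have "\<dots> \<le> C0 * (u - v)" using \<open>clamp u - clamp v \<le> u - v\<close> C0 by (intro mult_left_mono)
  finally show ?thesis unfolding cdf_clamp by simp
qed

context prob_space
begin

lemma C0_bounded_AE_range:
  assumes cb: "C0_bounded M C0 L X" and X: "X \<in> borel_measurable M"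
  shows "AE \<omega> in M. X \<omega> \<in> {0<..L}"
proof -
  note [measurable] = X
  have "{\<omega>\<in>space M. X \<omega> \<in> {0<..L}} = {\<omega>\<in>space M. X \<omega> \<le> L} - {\<omega>\<in>space M. X \<omega> \<le> 0}"
    by auto
  also have "prob \<dots> = cdf_of M X L - cdf_of M X 0"
    unfolding cdf_of_def using C0_bounded_length_pos[OF cb]
    by (intro finite_measure_Diff) auto
  finally have "prob {\<omega>\<in>space M. X \<omega> \<in> {0<..L}} = 1"
    using C0_bounded_cdf[OF cb] by simp
  then have "AE \<omega> in M. \<omega> \<in> {\<omega>\<in>space M. X \<omega> \<in> {0<..L}}" by (rule AE_prob_1)
  then show ?thesis by auto
qed

lemma prob_abs_diff_le:
  assumes X: "X \<in> borel_measurable M" and C0: "C0 \<ge> 0"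
    and lip: "\<And>u v. v \<le> u \<Longrightarrow> cdf_of M X u - cdf_of M X v \<le> C0 * (u - v)" and t: "t \<ge> 0"
  shows "prob {\<omega>\<in>space M. \<bar>x - X \<omega>\<bar> \<le> t} \<le> 2 * C0 * t"
proof (rule le_of_le_add_scaled_epsilon[OF C0])
  fix d :: real assume d: "d > 0"
  note [measurable] = X
  define A where "A = {\<omega>\<in>space M. \<bar>x - X \<omega>\<bar> \<le> t}"
  define B where "B = {\<omega>\<in>space M. X \<omega> \<le> x - t - d}"
  have "prob A + prob B = prob (A \<union> B)"
    unfolding A_def B_def using d by (intro finite_measure_Union[symmetric]) auto
  also have "\<dots> \<le> prob {\<omega>\<in>space M. X \<omega> \<le> x + t}"
    unfolding A_def B_def using d t by (intro finite_measure_mono) auto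
  finally have "prob A \<le> cdf_of M X (x + t) - cdf_of M X (x - t - d)"
    unfolding cdf_of_def B_def by simp
  also have "\<dots> \<le> C0 * ((x + t) - (x - t - d))" by (rule lip) (use d t in simp)
  finally show "prob A \<le> 2 * C0 * t + C0 * d" by (simp add: algebra_simps)
qed

lemma prob_Min_abs_diff_gt:
  fixes X :: "'i \<Rightarrow> 'a \<Rightarrow> real"
  assumes I: "finite I" "I \<noteq> {}" and indep: "indep_vars (\<lambda>_. borel) X I"
    and near: "\<And>j. j \<in> I \<Longrightarrow> prob {\<omega>\<in>space M. \<bar>x - X j \<omega>\<bar> \<le> t} \<le> p" and p: "p \<le> 1"
  shows "(1 - p) ^ card I \<le> prob {\<omega>\<in>space M. t < Min ((\<lambda>j. \<bar>x - X j \<omega>\<bar>) ` I)}"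
proof -
  define E where "E j = {\<omega>\<in>space M. t < \<bar>x - X j \<omega>\<bar>}" for j
  have "{\<omega>. t < \<bar>x - \<omega>\<bar>} \<in> sets borel"
    by (intro borel_open open_Collect_less continuous_intros)
  then have "indep_events E I"
    unfolding E_def by (intro indep_eventsI_indep_vars[OF indep]) simp
  then have "prob (\<Inter>j\<in>I. E j) = (\<Prod>j\<in>I. prob (E j))"
    unfolding indep_events_def using I by auto
  moreover have "1 - p \<le> prob (E j)" if j: "j \<in> I" for j
  proof -
    have [measurable]: "X j \<in> borel_measurable M"
      using indep j unfolding indep_vars_def by auto
    have "E j = space M - {\<omega>\<in>space M. \<bar>x - X j \<omega>\<bar> \<le> t}" unfolding E_def by auto
    then have "prob (E j) = 1 - prob {\<omega>\<in>space M. \<bar>x - X j \<omega>\<bar> \<le> t}"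
      by (simp add: prob_compl)
    then show ?thesis using near[OF j] by simp
  qed
  then have "(\<Prod>j\<in>I. 1 - p) \<le> (\<Prod>j\<in>I. prob (E j))"
    using p by (intro prod_mono) simp
  moreover have "{\<omega>\<in>space M. t < Min ((\<lambda>j. \<bar>x - X j \<omega>\<bar>) ` I)} = (\<Inter>j\<in>I. E j)"
    unfolding E_def using I by auto
  ultimately show ?thesis by simp
qed

lemma integrable_Min_abs_diff:
  fixes X :: "'i \<Rightarrow> 'a \<Rightarrow> real"
  assumes I: "finite I" "i \<in> I" and X: "\<And>j. j \<in> I \<Longrightarrow> X j \<in> borel_measurable M"
    and range: "AE \<omega> in M. X i \<omega> \<in> {0<..L}" and x: "x \<in> {0..L}"
  shows "integrable M (\<lambda>\<omega>. Min ((\<lambda>j. \<bar>x - X j \<omega>\<bar>) ` I))"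
proof (rule Bochner_Integration.integrable_bound[OF integrable_const[of L]])
  show "(\<lambda>\<omega>. Min ((\<lambda>j. \<bar>x - X j \<omega>\<bar>) ` I)) \<in> borel_measurable M"
    using I X by (intro borel_measurable_Min) auto
  show "AE \<omega> in M. norm (Min ((\<lambda>j. \<bar>x - X j \<omega>\<bar>) ` I)) \<le> norm L"
    using range
  proof eventually_elim
    case (elim \<omega>)
    have "Min ((\<lambda>j. \<bar>x - X j \<omega>\<bar>) ` I) \<le> \<bar>x - X i \<omega>\<bar>" using I by (intro Min_le) auto
    moreover have "0 \<le> Min ((\<lambda>j. \<bar>x - X j \<omega>\<bar>) ` I)" using I by (subst Min_ge_iff) auto
    ultimately show ?case using elim x by auto
  qed
qed

end

section \<open>Expectations from tail bounds\<close>

lemma power_Suc_diff_le: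
  fixes a b :: real
  assumes "0 \<le> b" "b \<le> a"
  shows "a ^ Suc k - b ^ Suc k \<le> real (Suc k) * a ^ k * (a - b)"
proof -
  have "(\<Sum>p<Suc k. a ^ p * b ^ (k - p)) \<le> (\<Sum>p<Suc k. a ^ p * a ^ (k - p))"
    using assms by (intro sum_mono mult_left_mono power_mono) auto
  also have "\<dots> = (\<Sum>p<Suc k. a ^ k)"
    by (intro sum.cong) (auto simp: power_add[symmetric])
  finally have "(a - b) * (\<Sum>p<Suc k. a ^ p * b ^ (k - p)) \<le> (a - b) * (real (Suc k) * a ^ k)"
    using assms by (intro mult_left_mono) auto
  then show ?thesis unfolding diff_power_eq_sum by (simp only: ac_simps)
qed

lemma power_Suc_le_sum_powers: "real n ^ Suc k \<le> real (Suc k) * (\<Sum>j\<le>n. real j ^ k)"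
proof (induction n)
  case (Suc n)
  have "real (Suc n) ^ Suc k \<le> real n ^ Suc k + real (Suc k) * real (Suc n) ^ k"
    using power_Suc_diff_le[of "real n" "real (Suc n)" k] by simp
  also have "\<dots> \<le> real (Suc k) * (\<Sum>j\<le>Suc n. real j ^ k)"
    using Suc.IH by (simp add: distrib_left)
  finally show ?case .
qed simp

lemma sum_level_indicators_le:
  fixes \<delta> y :: real
  assumes \<delta>: "\<delta> > 0" and y: "y \<ge> 0"
  shows "(\<Sum>i<N. \<delta> * of_bool (real (Suc i) * \<delta> < y)) \<le> y"
proof -
  define f where "f i = min y (real i * \<delta>)" for i
  have "\<delta> * of_bool (real (Suc i) * \<delta> < y) \<le> f (Suc i) - f i" for i
    using \<delta> by (auto simp: f_def algebra_simps)
  then have "(\<Sum>i<N. \<delta> * of_bool (real (Suc i) * \<delta> < y)) \<le> (\<Sum>i<N. f (Suc i) - f i)"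
    by (rule sum_mono)
  also have "\<dots> = f N - f 0" by (rule sum_lessThan_telescope)
  also have "\<dots> \<le> y" using y by (simp add: f_def)
  finally show ?thesis .
qed

context prob_space
begin

lemma sum_level_probs_le_expectation:
  assumes Y: "integrable M Y" "\<And>\<omega>. \<omega> \<in> space M \<Longrightarrow> 0 \<le> Y \<omega>" and \<delta>: "\<delta> > 0"
  shows "(\<Sum>i<N. \<delta> * prob {\<omega>\<in>space M. real (Suc i) * \<delta> < Y \<omega>}) \<le> expectation Y"
proof -
  have [measurable]: "Y \<in> borel_measurable M" using Y(1) by simp
  define E where "E i = {\<omega>\<in>space M. real (Suc i) * \<delta> < Y \<omega>}" for i
  have E [measurable]: "E i \<in> events" for i unfolding E_def by measurable
  have "(\<Sum>i<N. \<delta> * prob (E i)) = expectation (\<lambda>\<omega>. \<Sum>i<N. \<delta> * indicator (E i) \<omega>)"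
    using E by (subst Bochner_Integration.integral_sum)
      (auto simp: Int_absorb2 sets.sets_into_space less_top[symmetric])
  also have "\<dots> \<le> expectation Y"
  proof (rule integral_mono[OF _ Y(1)])
    show "integrable M (\<lambda>\<omega>. \<Sum>i<N. \<delta> * indicator (E i) \<omega>)"
      using E by (intro Bochner_Integration.integrable_sum)
        (auto intro!: Bochner_Integration.integrable_mult_right integrable_real_indicator
          simp: less_top[symmetric])
    fix \<omega> assume "\<omega> \<in> space M"
    then show "(\<Sum>i<N. \<delta> * indicator (E i) \<omega>) \<le> Y \<omega>"
      using sum_level_indicators_le[OF \<delta> Y(2), of \<omega> N] by (simp add: E_def indicator_def)
  qed
  finally show ?thesis unfolding E_def .
qed

lemma expectation_ge_of_tail_ge:
  assumes Y: "integrable M Y" "\<And>\<omega>. \<omega> \<in> space M \<Longrightarrow> 0 \<le> Y \<omega>" and c: "c > 0"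
    and tail: "\<And>t. 0 \<le> t \<Longrightarrow> t \<le> c \<Longrightarrow> (1 - t / c) ^ k \<le> prob {\<omega>\<in>space M. t < Y \<omega>}"
  shows "c / real (Suc k) \<le> expectation Y"
proof -
  have riemann: "c / real (Suc k) * (real n / real (Suc n)) ^ Suc k \<le> expectation Y" for n
  proof -
    define N where "N = real (Suc n)"
    define \<delta> where "\<delta> = c / N"
    have N: "N > 0" and \<delta>: "\<delta> > 0" using c by (auto simp: N_def \<delta>_def)
    have "c / real (Suc k) * (real n / N) ^ Suc k = \<delta> / N ^ k * (real n ^ Suc k / real (Suc k))"
      by (simp add: \<delta>_def power_divide field_simps)
    also have "\<dots> \<le> \<delta> / N ^ k * (\<Sum>j\<le>n. real j ^ k)"
      using power_Suc_le_sum_powers[of n k] \<delta> N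
      by (intro mult_left_mono) (auto simp: divide_le_eq mult.commute)
    also have "(\<Sum>j\<le>n. real j ^ k) = (\<Sum>i<Suc n. real (n - i) ^ k)"
      using sum.nat_diff_reindex[where g = "\<lambda>j. real j ^ k" and n = "Suc n"]
      by (simp add: lessThan_Suc_atMost)
    also have "\<delta> / N ^ k * (\<Sum>i<Suc n. real (n - i) ^ k) = (\<Sum>i<Suc n. \<delta> * (real (n - i) / N) ^ k)"
      unfolding sum_distrib_left by (simp add: power_divide)
    also have "\<dots> \<le> (\<Sum>i<Suc n. \<delta> * prob {\<omega>\<in>space M. real (Suc i) * \<delta> < Y \<omega>})"
    proof (intro sum_mono mult_left_mono)
      fix i assume "i \<in> {..<Suc n}"
      then have "i \<le> n" by simp
      have frac: "real (Suc i) * \<delta> / c = real (Suc i) / N" using c by (simp add: \<delta>_def)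
      have "1 - real (Suc i) * \<delta> / c = real (n - i) / N"
        unfolding frac using \<open>i \<le> n\<close> N by (simp add: N_def field_simps of_nat_diff)
      moreover have "real (Suc i) * \<delta> \<le> c"
        using \<open>i \<le> n\<close> c by (simp add: \<delta>_def N_def field_simps)
      ultimately show "(real (n - i) / N) ^ k \<le> prob {\<omega>\<in>space M. real (Suc i) * \<delta> < Y \<omega>}"
        using tail[of "real (Suc i) * \<delta>"] \<delta> by simp
    qed (use \<delta> in simp)
    also have "\<dots> \<le> expectation Y" by (rule sum_level_probs_le_expectation[OF Y \<delta>])
    finally show ?thesis unfolding N_def .
  qed
  have "(\<lambda>n. c / real (Suc k) * (real n / real (Suc n)) ^ Suc k) \<longlonglongrightarrow> c / real (Suc k) * 1 ^ Suc k"
    by (intro tendsto_intros LIMSEQ_n_over_Suc_n)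
  then show ?thesis using riemann by (simp add: LIMSEQ_le_const2)
qed

lemma expectation_Min_abs_diff_ge:
  fixes X :: "'i \<Rightarrow> 'a \<Rightarrow> real"
  assumes I: "finite I" "I \<noteq> {}" and indep: "indep_vars (\<lambda>_. borel) X I"
    and C0_bounded: "\<And>j. j \<in> I \<Longrightarrow> C0_bounded M C0 L (X j)" and C0: "C0 > 0" and x: "x \<in> {0..L}"
  shows "1 / (2 * C0 * real (Suc (card I))) \<le> expectation (\<lambda>\<omega>. Min ((\<lambda>j. \<bar>x - X j \<omega>\<bar>) ` I))"
proof -
  define Y where "Y \<omega> = Min ((\<lambda>j. \<bar>x - X j \<omega>\<bar>) ` I)" for \<omega>
  define c where "c = 1 / (2 * C0)"
  have X: "X j \<in> borel_measurable M" if "j \<in> I" for j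
    using indep that unfolding indep_vars_def by auto
  obtain i where "i \<in> I" using I by blast
  have Y_nonneg: "0 \<le> Y \<omega>" for \<omega> using I by (simp add: Y_def)
  have Y_integrable: "integrable M Y" unfolding Y_def
    by (rule integrable_Min_abs_diff[OF I(1) \<open>i \<in> I\<close> X C0_bounded_AE_range x])
      (use C0_bounded X \<open>i \<in> I\<close> in auto)
  have "(1 - t / c) ^ card I \<le> prob {\<omega>\<in>space M. t < Y \<omega>}" if "0 \<le> t" "t \<le> c" for t
  proof -
    have "(1 - 2 * C0 * t) ^ card I \<le> prob {\<omega>\<in>space M. t < Y \<omega>}"
      unfolding Y_def using C0 that
      by (intro prob_Min_abs_diff_gt[OF I indep] prob_abs_diff_le
          C0_bounded_cdf_lipschitz[OF C0_bounded] X) (auto simp: c_def field_simps)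
    then show ?thesis by (simp add: c_def mult.commute)
  qed
  from expectation_ge_of_tail_ge[OF Y_integrable Y_nonneg _ this] C0
  show ?thesis by (simp add: Y_def c_def)
qed

end

theorem mainTheorem11:
  fixes M :: "'a measure" and X :: "nat \<Rightarrow> 'a \<Rightarrow> real" and k :: nat and C0 L :: real
  assumes "prob_space M"
    and "k \<ge> 1"
    and "\<And>j. j \<in> {1..k} \<Longrightarrow> X j \<in> borel_measurable M"
    and "prob_space.indep_vars M (\<lambda>_. borel) X {1..k}"
    and "\<And>j. j \<in> {1..k} \<Longrightarrow> distr M borel (X j) = distr M borel (X 1)"
    and "\<And>j. j \<in> {1..k} \<Longrightarrow> C0_bounded M C0 L (X j)"
  shows "\<forall>x\<in>{0..L}. (\<integral>\<omega>. Min ((\<lambda>j. \<bar>x - X j \<omega>\<bar>) ` {1..k}) \<partial>M) \<ge> 1 / (2 * C0 * (real k + 1))"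
proof
  fix x assume x: "x \<in> {0..L}"
  interpret prob_space M by (rule assms(1))
  have I: "finite {1..k}" "{1..k} \<noteq> {}" using assms(2) by auto
  show "1 / (2 * C0 * (real k + 1)) \<le> (\<integral>\<omega>. Min ((\<lambda>j. \<bar>x - X j \<omega>\<bar>) ` {1..k}) \<partial>M)"
  proof (cases "C0 > 0")
    case True
    from expectation_Min_abs_diff_ge[OF I assms(4) assms(6) True x] show ?thesis
      by (simp add: add.commute)
  next
    case False
    then have "1 / (2 * C0 * (real k + 1)) \<le> 0"
      by (intro divide_nonneg_nonpos mult_nonpos_nonneg[of "2 * C0"]) auto
    also have "0 \<le> (\<integral>\<omega>. Min ((\<lambda>j. \<bar>x - X j \<omega>\<bar>) ` {1..k}) \<partial>M)"
      using I by (intro integral_nonneg_AE AE_I2) (simp add: Min_ge_iff)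
    finally show ?thesis .
  qed
qed

end
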